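(* For every $q\geqslant 1$ and all natural numbers $m_0,\dots,m_{q-1}>1$, the following sentences are provable in the theory ${\sf TQ}$: $\forall x_0,\dots,x_{q-1}\exists y\,[\bigwedge_{j<q}\neg\Re_{m_j}(y\cdot x_j)]$; $\forall x_0,\dots,x_{q-1},u\exists y\,[u<y\wedge\bigwedge_{j<q}\neg\Re_{m_j}(y\cdot x_j)]$; $\forall x_0,\dots,x_{q-1},v\exists y\,[y<v\wedge\bigwedge_{j<q}\neg\Re_{m_j}(y\cdot x_j)]$; $\forall x_0,\dots,x_{q-1},u,v\exists y\,[u<v\rightarrow (u<y\wedge y<v\wedge\bigwedge_{j<q}\neg\Re_{m_j}(y\cdot x_j))]$.
   Context: Language $\{<,\times,\square^{-1},\mathbf{1}\}$; $y^n$ abbreviates $y\cdots y$ ($n$ times); for $n\geqslant 1$, $\Re_n(y)$ abbreviates the formula $\exists x\,(y=x^n)$. ${\sf TQ}$ is the theory axiomatized by: ($\texttt{O}_1$) $\forall x,y(x<y\rightarrow\neg(y<x))$; ($\texttt{O}_2$) $\forall x,y,z(x<y\wedge y<z\rightarrow x<z)$; ($\texttt{O}_3$) $\forall x,y(x<y\vee x=y\vee y<x)$; ($\texttt{M}_1$) $\forall x,y,z(x\cdot(y\cdot z)=(x\cdot y)\cdot z)$; ($\texttt{M}_2$) $\forall x(x\cdot\mathbf{1}=x)$; ($\texttt{M}_3$) $\forall x(x\cdot x^{-1}=\mathbf{1})$; ($\texttt{M}_4$) $\forall x,y(x\cdot y=y\cdot x)$; ($\texttt{M}_5$) $\forall x,y,z(x<y\rightarrow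 x\cdot z<y\cdot z)$; ($\texttt{M}_6$) $\exists y(y\neq\mathbf{1})$; ($\texttt{M}_{10}$) for each $n\geqslant1$: $\forall x,z\exists y(x<z\rightarrow x<y^n\wedge y^n<z)$; ($\texttt{M}_{11}$) for each $n\geqslant 1$, each $q\geqslant1$ and all natural numbers $m_0,\dots,m_{q-1}>1$: $\forall x_0,\dots,x_{q-1}\exists y\forall z\bigwedge_{j<q,\ m_j\nmid n}(y^n\cdot x_j\neq z^{m_j})$, the conjunction ranging over those $j<q$ for which $m_j$ does not divide $n$. *)

theory Defs
  imports Main
begin

text \<open>Structures for the language (<, *, inverse, 1) are given by four
  components on a carrier type 'a. Provability in TQ is rendered semantically
  (by Goedel completeness): truth in every model of TQ.\<close>

text \<open>y^n = y * ... * y (n times), for n >= 1; the value at n = 0 is the unit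
  (never used by the statement).\<close>
fun tq_pow :: "('a \<Rightarrow> 'a \<Rightarrow> 'a) \<Rightarrow> 'a \<Rightarrow> 'a \<Rightarrow> nat \<Rightarrow> 'a" where
  "tq_pow mult one y 0 = one"
| "tq_pow mult one y (Suc 0) = y"
| "tq_pow mult one y (Suc (Suc n)) = mult y (tq_pow mult one y (Suc n))"

definition tq_root :: "('a \<Rightarrow> 'a \<Rightarrow> 'a) \<Rightarrow> 'a \<Rightarrow> nat \<Rightarrow> 'a \<Rightarrow> bool" where
  "tq_root mult one n y \<longleftrightarrow> (\<exists>x. y = tq_pow mult one x n)"

definition TQ_model ::
  "('a \<Rightarrow> 'a \<Rightarrow> bool) \<Rightarrow> ('a \<Rightarrow> 'a \<Rightarrow> 'a) \<Rightarrow> ('a \<Rightarrow> 'a) \<Rightarrow> 'a \<Rightarrow> bool" where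
  "TQ_model lt mult iv one \<longleftrightarrow>
     (\<forall>x y. lt x y \<longrightarrow> \<not> lt y x) \<and>
     (\<forall>x y z. lt x y \<and> lt y z \<longrightarrow> lt x z) \<and>
     (\<forall>x y. lt x y \<or> x = y \<or> lt y x) \<and>
     (\<forall>x y z. mult x (mult y z) = mult (mult x y) z) \<and>
     (\<forall>x. mult x one = x) \<and>
     (\<forall>x. mult x (iv x) = one) \<and>
     (\<forall>x y. mult x y = mult y x) \<and>
     (\<forall>x y z. lt x y \<longrightarrow> lt (mult x z) (mult y z)) \<and>
     (\<exists>y. y \<noteq> one) \<and>
     (\<forall>n\<ge>1. \<forall>x z. \<exists>y. lt x z \<longrightarrow>
         lt x (tq_pow mult one y n) \<and> lt (tq_pow mult one y n) z) \<and>
     (\<forall>n\<ge>1. \<forall>q\<ge>1. \<forall>m::nat\<Rightarrow>nat. (\<forall>j<q. m j > 1) \<longrightarrow>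
        (\<forall>x::nat\<Rightarrow>'a. \<exists>y. \<forall>z. \<forall>j<q. \<not> (m j dvd n) \<longrightarrow>
            mult (tq_pow mult one y n) (x j) \<noteq> tq_pow mult one z (m j)))"

end

theory Submission
  imports Defs
begin

text \<open>Axiom M11 with n = 1 yields y such that no y x_j is an m_j-th power.
  Multiplying y by an m_j-th power keeps every y x_j a non-m_j-th power, so y w^N
  with N = m_0 ... m_(q-1) works as well, and by M10 the N-th power w^N can be
  placed in any interval. Unboundedness in both directions follows, since a
  nontrivial ordered group has an element above 1.\<close>

locale mult_abelian_group =
  fixes mult :: "'a \<Rightarrow> 'a \<Rightarrow> 'a" and iv :: "'a \<Rightarrow> 'a" and one :: 'a
  assumes assoc: "\<And>x y z. mult x (mult y z) = mult (mult x y) z"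
    and right_unit: "\<And>x. mult x one = x"
    and right_inverse: "\<And>x. mult x (iv x) = one"
    and comm: "\<And>x y. mult x y = mult y x"
begin

abbreviation pow :: "'a \<Rightarrow> nat \<Rightarrow> 'a" where
  "pow \<equiv> tq_pow mult one"

abbreviation root :: "nat \<Rightarrow> 'a \<Rightarrow> bool" where
  "root \<equiv> tq_root mult one"

lemma left_unit: "mult one x = x"
  using right_unit comm by metis

lemma left_inverse: "mult (iv x) x = one"
  using right_inverse comm by metis

lemma mult_inverse_cancel: "mult (mult a (iv b)) b = a"
  by (metis assoc left_inverse right_unit)

lemma tq_pow_Suc: "pow y (Suc n) = mult y (pow y n)"
  by (cases n) (auto simp: right_unit)

lemma tq_pow_add: "pow y (a + b) = mult (pow y a) (pow y b)"
  by (induction a) (auto simp: tq_pow_Suc left_unit assoc)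

lemma tq_pow_mult: "pow y (a * b) = pow (pow y a) b"
  by (induction b) (auto simp: tq_pow_Suc tq_pow_add comm)

lemma tq_pow_unit: "pow one n = one"
  by (induction n) (auto simp: tq_pow_Suc right_unit)

lemma tq_pow_mult_distrib: "pow (mult a b) n = mult (pow a n) (pow b n)"
  by (induction n) (simp_all add: tq_pow_Suc right_unit, metis assoc comm)

lemma tq_root_mult_pow_iff: "root n (mult (pow c n) a) \<longleftrightarrow> root n a"
proof
  assume "root n (mult (pow c n) a)"
  then obtain z where "mult (pow c n) a = pow z n"
    unfolding tq_root_def by blast
  then have "mult (pow (iv c) n) (pow z n) = mult (pow (mult (iv c) c) n) a"
    by (simp add: tq_pow_mult_distrib flip: assoc)
  then have "a = mult (pow (iv c) n) (pow z n)"
    by (simp add: left_inverse tq_pow_unit left_unit)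
  then show "root n a"
    unfolding tq_root_def by (metis tq_pow_mult_distrib)
next
  assume "root n a"
  then show "root n (mult (pow c n) a)"
    unfolding tq_root_def by (metis tq_pow_mult_distrib)
qed

end

locale TQ = mult_abelian_group mult iv one
  for lt :: "'a \<Rightarrow> 'a \<Rightarrow> bool" and mult :: "'a \<Rightarrow> 'a \<Rightarrow> 'a"
    and iv :: "'a \<Rightarrow> 'a" and one :: 'a +
  assumes asym: "\<And>x y. lt x y \<Longrightarrow> \<not> lt y x"
    and trans: "\<And>x y z. lt x y \<Longrightarrow> lt y z \<Longrightarrow> lt x z"
    and trichotomy: "\<And>x y. lt x y \<or> x = y \<or> lt y x"
    and mult_strict_mono: "\<And>x y z. lt x y \<Longrightarrow> lt (mult x z) (mult y z)"
    and nontrivial: "\<exists>y. y \<noteq> one"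
    and pow_dense: "\<And>n x z. n \<ge> 1 \<Longrightarrow> lt x z \<Longrightarrow> \<exists>y. lt x (pow y n) \<and> lt (pow y n) z"
    and pow_shift_non_roots: "\<And>n (q::nat) m x. n \<ge> 1 \<Longrightarrow> q \<ge> 1 \<Longrightarrow> \<forall>j<q. m j > 1 \<Longrightarrow>
       \<exists>y. \<forall>z. \<forall>j<q. \<not> m j dvd n \<longrightarrow> mult (pow y n) (x j) \<noteq> pow z (m j)"

lemma TQ_if_TQ_model: "TQ_model lt mult iv one \<Longrightarrow> TQ lt mult iv one"
  unfolding TQ_model_def TQ_def TQ_axioms_def mult_abelian_group_def
  apply (elim conjE)
  apply (intro conjI; assumption?)
    subgoal by blast
   subgoal premises ax using ax(10) by blast
  subgoal premises ax using ax(11) by blast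
  done

context TQ
begin

lemma exists_greater_one: "\<exists>g. lt one g"
proof -
  obtain a where "a \<noteq> one"
    using nontrivial by blast
  then consider "lt one a" | "lt a one"
    using trichotomy by blast
  then show ?thesis
  proof cases
    case 2
    then have "lt (mult a (iv a)) (mult one (iv a))"
      by (rule mult_strict_mono)
    then show ?thesis
      by (auto simp: right_inverse left_unit)
  qed blast
qed

lemma less_mult_greater_one: "lt one g \<Longrightarrow> lt u (mult u g)"
  using mult_strict_mono[of one g u] by (simp add: left_unit comm)

lemma mult_inverse_less: "lt one g \<Longrightarrow> lt (mult u (iv g)) u"
  using mult_strict_mono[of one g "mult u (iv g)"]
  by (metis comm left_unit mult_inverse_cancel)

lemma exists_non_roots:
  fixes q :: nat
  assumes "\<forall>j<q. m j > 1"
  shows "\<exists>y. \<forall>j<q. \<not> root (m j) (mult y (x j))"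
proof (cases "q = 0")
  case False
  then obtain y where "\<forall>z. \<forall>j<q. \<not> m j dvd 1 \<longrightarrow> mult (pow y 1) (x j) \<noteq> pow z (m j)"
    using pow_shift_non_roots[of 1 q m x] assms by auto
  moreover have "\<not> m j dvd 1" if "j < q" for j
    using assms that by auto
  ultimately show ?thesis
    unfolding tq_root_def by auto
qed simp

lemma exists_non_roots_between:
  fixes q :: nat
  assumes "lt u v" and m: "\<forall>j<q. m j > 1"
  shows "\<exists>y. lt u y \<and> lt y v \<and> (\<forall>j<q. \<not> root (m j) (mult y (x j)))"
proof -
  obtain y0 where y0: "\<forall>j<q. \<not> root (m j) (mult y0 (x j))"
    using exists_non_roots m by blast
  define N where "N = (\<Prod>j<q. m j)"
  have "N \<ge> 1"
    unfolding N_def using m by (intro prod_ge_1) auto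
  then obtain w where w: "lt (mult u (iv y0)) (pow w N)" "lt (pow w N) (mult v (iv y0))"
    using pow_dense mult_strict_mono[OF \<open>lt u v\<close>] by blast
  define y where "y = mult (pow w N) y0"
  have "lt u y" "lt y v"
    using mult_strict_mono[OF w(1), of y0] mult_strict_mono[OF w(2), of y0]
    by (simp_all add: y_def mult_inverse_cancel)
  moreover have "\<not> root (m j) (mult y (x j))" if "j < q" for j
  proof -
    have "m j dvd N"
      unfolding N_def using \<open>j < q\<close> by (simp add: dvd_prodI)
    then obtain k where "N = k * m j"
      by (metis dvdE mult.commute)
    then have "mult y (x j) = mult (pow (pow w k) (m j)) (mult y0 (x j))"
      by (simp add: y_def tq_pow_mult assoc)
    then show ?thesis
      using y0 \<open>j < q\<close> by (simp add: tq_root_mult_pow_iff)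
  qed
  ultimately show ?thesis
    by blast
qed

end

theorem lemma4:
  fixes lt :: "'a \<Rightarrow> 'a \<Rightarrow> bool" and mult :: "'a \<Rightarrow> 'a \<Rightarrow> 'a"
    and iv :: "'a \<Rightarrow> 'a" and one :: 'a
    and q :: nat and m :: "nat \<Rightarrow> nat"
  assumes "TQ_model lt mult iv one"
    and "q \<ge> 1"
    and "\<forall>j<q. m j > 1"
  shows "(\<forall>x::nat\<Rightarrow>'a. \<exists>y. \<forall>j<q. \<not> tq_root mult one (m j) (mult y (x j)))
       \<and> (\<forall>(x::nat\<Rightarrow>'a) u. \<exists>y. lt u y \<and> (\<forall>j<q. \<not> tq_root mult one (m j) (mult y (x j))))
       \<and> (\<forall>(x::nat\<Rightarrow>'a) v. \<exists>y. lt y v \<and> (\<forall>j<q. \<not> tq_root mult one (m j) (mult y (x j))))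
       \<and> (\<forall>(x::nat\<Rightarrow>'a) u v. \<exists>y. lt u v \<longrightarrow>
            (lt u y \<and> lt y v \<and> (\<forall>j<q. \<not> tq_root mult one (m j) (mult y (x j)))))"
proof -
  interpret TQ lt mult iv one
    using assms(1) by (rule TQ_if_TQ_model)
  obtain g where g: "lt one g"
    using exists_greater_one by blast
  show ?thesis
  proof (intro conjI allI)
    show "\<exists>y. \<forall>j<q. \<not> root (m j) (mult y (x j))" for x
      using exists_non_roots[OF assms(3)] .
    show "\<exists>y. lt u y \<and> (\<forall>j<q. \<not> root (m j) (mult y (x j)))" for x u
      using exists_non_roots_between[OF less_mult_greater_one[OF g] assms(3)] by blast
    show "\<exists>y. lt y v \<and> (\<forall>j<q. \<not> root (m j) (mult y (x j)))" for x v
      using exists_non_roots_between[OF mult_inverse_less[OF g] assms(3)] by blast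
    show "\<exists>y. lt u v \<longrightarrow> lt u y \<and> lt y v \<and> (\<forall>j<q. \<not> root (m j) (mult y (x j)))" for x u v
      using exists_non_roots_between[OF _ assms(3)] by blast
  qed
qed

end
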